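(* Let $k$ be an algebraically closed field of characteristic $p>0$, $A=k[X,Y]$, and $F=X^p+Y^{p+1}$. Then $A^p\subseteq k[F,Y]$ (so $F$ is a good pseudo field generator in $A$), for every $\lambda\in k$ the ring $A/(F-\lambda)$ is $k$-rational, and $F$ is not a field generator in $A$.
   Context: $A^p=\{a^p:a\in A\}$. $F$ is a good pseudo field generator in $A$ if there is $G\in A$ with $\operatorname{Frac}A$ purely inseparable over $k(F,G)$. $F$ is a field generator in $A$ if $k(F,G)=\operatorname{Frac}A$ for some $G\in\operatorname{Frac}A$. "$A/(H)$ is $k$-rational" means $H$ is irreducible and $\operatorname{Frac}(A/(H))$ is purely transcendental of transcendence degree $1$ over $k$. *)

theory Defs
  imports "HOL-Computational_Algebra.Computational_Algebra"
begin

text \<open>Bivariate polynomials k[X,Y] are represented as 'k poly poly: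
  the outer polynomial variable is Y, the coefficients are polynomials in X.\<close>

definition alg_closed :: "'k::field itself \<Rightarrow> bool" where
  "alg_closed _ \<longleftrightarrow> (\<forall>q::'k poly. degree q \<ge> 1 \<longrightarrow> (\<exists>x. poly q x = 0))"

definition varX :: "'k::comm_ring_1 poly poly" where
  "varX = [:[:0, 1:]:]"

definition varY :: "'k::comm_ring_1 poly poly" where
  "varY = [:0, 1:]"

definition constA :: "'k::comm_ring_1 \<Rightarrow> 'k poly poly" where
  "constA c = [:[:c:]:]"

definition eval2 :: "('k::comm_ring_1 \<Rightarrow> 'b::comm_ring_1) \<Rightarrow> 'k poly poly \<Rightarrow> 'b \<Rightarrow> 'b \<Rightarrow> 'b" where
  "eval2 e P x y = poly (map_poly (\<lambda>c. poly (map_poly e c) x) P) y"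

definition kalg2 :: "'k::comm_ring_1 poly poly \<Rightarrow> 'k poly poly \<Rightarrow> 'k poly poly set" where
  "kalg2 F G = {eval2 constA P F G | P. True}"

definition kfield2 :: "('k::field poly poly) fract \<Rightarrow> 'k poly poly fract \<Rightarrow> 'k poly poly fract set" where
  "kfield2 F G = {eval2 (\<lambda>c. to_fract (constA c)) P F G / eval2 (\<lambda>c. to_fract (constA c)) Q F G
                  | P Q. eval2 (\<lambda>c. to_fract (constA c)) Q F G \<noteq> 0}"

definition purely_inseparable_over :: "'k::field poly poly fract set \<Rightarrow> bool" where
  "purely_inseparable_over K \<longleftrightarrow> (\<forall>x::'k poly poly fract. \<exists>n. x ^ (CHAR('k) ^ n) \<in> K)"

definition good_pseudo_field_generator :: "'k::field poly poly \<Rightarrow> bool" where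
  "good_pseudo_field_generator F \<longleftrightarrow>
     (\<exists>G. purely_inseparable_over (kfield2 (to_fract F) (to_fract G)))"

definition field_generator :: "'k::field poly poly \<Rightarrow> bool" where
  "field_generator F \<longleftrightarrow> (\<exists>G. kfield2 (to_fract F) G = UNIV)"

text \<open>A/(H) is k-rational: H irreducible and Frac(A/(H)) is k-isomorphic to the
  rational function field k(t) = 'k poly fract.  A k-algebra map A/(H) \<rightarrow> k(t) is the
  same as a k-algebra map A \<rightarrow> k(t) (given by the images u, v of X, Y) with kernel
  containing (H); it is injective iff the kernel is exactly (H), and it induces an
  isomorphism Frac(A/(H)) \<cong> k(t) iff k(t) is generated as a field by its image.\<close>
definition k_rational_quotient :: "'k::field poly poly \<Rightarrow> bool" where
  "k_rational_quotient H \<longleftrightarrow> irreducible H \<and>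
     (\<exists>u v :: 'k poly fract.
        (\<forall>P. eval2 (\<lambda>c. to_fract [:c:]) P u v = 0 \<longleftrightarrow> H dvd P) \<and>
        (\<forall>r. \<exists>P Q. eval2 (\<lambda>c. to_fract [:c:]) Q u v \<noteq> 0 \<and>
               r = eval2 (\<lambda>c. to_fract [:c:]) P u v / eval2 (\<lambda>c. to_fract [:c:]) Q u v))"

end

theory Submission
  imports Defs "HOL-Number_Theory.Cong"
begin

text \<open>Frobenius gives \<open>A\<^sup>p \<subseteq> k[X\<^sup>p, Y] = k[F, Y]\<close>, because \<open>X\<^sup>p = F - Y\<^sup>p\<^sup>+\<^sup>1\<close>; this makes \<open>Frac A\<close>
  purely inseparable over \<open>k(F, Y)\<close>. With \<open>d\<^sup>p = c\<close>, the fibre \<open>F = c\<close> is parametrised by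
  \<open>X = d - t\<^sup>p\<^sup>+\<^sup>1\<close>, \<open>Y = t\<^sup>p\<close>; the coprime degrees \<open>p + 1\<close> and \<open>p\<close> make \<open>(F - c)\<close> the kernel
  of this parametrisation, and \<open>t = (d - X) / Y\<close> shows that it generates \<open>k(t)\<close>.

  If \<open>k(F, G) = Frac A\<close>, then \<open>\<partial>\<^sub>X F = 0\<close>, \<open>\<partial>\<^sub>Y F = Y\<^sup>p\<close> and \<open>\<partial>\<^sub>X G \<noteq> 0\<close>, so the Jacobian of
  \<open>(F, G)\<close> does not vanish and \<open>F, G\<close> are algebraically independent. Differentiating
  \<open>Y Q(F, G) = P(F, G)\<close> in \<open>X\<close> and in \<open>Y\<close> yields the polynomial identity
  \<open>Q\<^sup>p\<^sup>+\<^sup>2 + P\<^sup>p\<^sup>+\<^sup>1 \<partial>\<^sub>1Q - P\<^sup>p Q \<partial>\<^sub>1P = 0\<close>. Specialising the second variable gives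
  \<open>q\<^sup>p\<^sup>+\<^sup>2 = r\<^sup>p (q r' - r q')\<close> in \<open>k[t]\<close>, where common roots of \<open>q\<close> and \<open>r\<close> can be divided out
  until the degrees contradict each other.\<close>

section \<open>Ring homomorphisms and evaluation\<close>

locale comm_ring_hom =
  fixes hom :: "'a::comm_ring_1 \<Rightarrow> 'b::comm_ring_1"
  assumes hom_add: "hom (x + y) = hom x + hom y"
    and hom_mult: "hom (x * y) = hom x * hom y"
    and hom_one: "hom 1 = 1"
begin

lemma hom_zero: "hom 0 = 0"
  using hom_add[of 0 0] by simp

lemma hom_uminus: "hom (- x) = - hom x"
  using hom_add[of "- x" x] by (simp add: hom_zero eq_neg_iff_add_eq_0)

lemma hom_diff: "hom (x - y) = hom x - hom y"
  using hom_add[of x "- y"] by (simp add: hom_uminus)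

lemma hom_power: "hom (x ^ n) = hom x ^ n"
  by (induction n) (simp_all add: hom_one hom_mult)

lemmas hom_simps = hom_add hom_mult hom_one hom_zero hom_uminus hom_diff hom_power

lemma map_poly_hom_add: "map_poly hom (p + q) = map_poly hom p + map_poly hom q"
  by (intro poly_eqI) (simp add: coeff_map_poly hom_simps)

lemma map_poly_hom_mult: "map_poly hom (p * q) = map_poly hom p * map_poly hom q"
proof (induction p)
  case (pCons c p)
  have "map_poly hom (pCons c p * q) = map_poly hom (smult c q) + map_poly hom (pCons 0 (p * q))"
    by (simp add: map_poly_hom_add)
  then show ?case
    using pCons.IH by (simp add: map_poly_smult map_poly_pCons hom_simps)
qed (simp add: hom_zero)

lemma range_add: "a \<in> range hom \<Longrightarrow> b \<in> range hom \<Longrightarrow> a + b \<in> range hom"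
  by (auto simp flip: hom_add)

lemma range_mult: "a \<in> range hom \<Longrightarrow> b \<in> range hom \<Longrightarrow> a * b \<in> range hom"
  by (auto simp flip: hom_mult)

lemma range_power: "a \<in> range hom \<Longrightarrow> a ^ n \<in> range hom"
  by (auto simp flip: hom_power)

lemma comm_ring_hom_map_poly: "comm_ring_hom (map_poly hom)"
  by unfold_locales (simp_all add: map_poly_hom_add map_poly_hom_mult hom_simps)

end

lemma comm_ring_hom_comp: "comm_ring_hom f \<Longrightarrow> comm_ring_hom g \<Longrightarrow> comm_ring_hom (\<lambda>x. g (f x))"
  by (simp add: comm_ring_hom_def)

lemma comm_ring_hom_poly: "comm_ring_hom (\<lambda>p. poly p x)"
  by unfold_locales simp_all

lemma comm_ring_hom_const_poly: "comm_ring_hom (\<lambda>c. [:c:])"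
  by unfold_locales (simp_all add: one_pCons)

lemma comm_ring_hom_to_fract: "comm_ring_hom to_fract"
  by unfold_locales simp_all

lemma comm_ring_hom_constA: "comm_ring_hom constA"
  by unfold_locales (simp_all add: constA_def one_pCons)

lemma comm_ring_hom_eval2:
  assumes "comm_ring_hom e" shows "comm_ring_hom (\<lambda>P. eval2 e P x y)"
proof -
  interpret e: comm_ring_hom e by fact
  have "comm_ring_hom (\<lambda>c. poly (map_poly e c) x)"
    by (rule comm_ring_hom_comp[OF e.comm_ring_hom_map_poly comm_ring_hom_poly])
  then show ?thesis
    unfolding eval2_def
    by (rule comm_ring_hom_comp[OF comm_ring_hom.comm_ring_hom_map_poly comm_ring_hom_poly])
qed

lemma eval2_varX: "comm_ring_hom e \<Longrightarrow> eval2 e varX x y = x"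
  by (simp add: eval2_def varX_def map_poly_pCons comm_ring_hom.hom_simps)

lemma eval2_varY: "comm_ring_hom e \<Longrightarrow> eval2 e varY x y = y"
  by (simp add: eval2_def varY_def map_poly_pCons comm_ring_hom.hom_simps)

lemma eval2_constA: "comm_ring_hom e \<Longrightarrow> eval2 e (constA c) x y = e c"
  by (simp add: eval2_def constA_def map_poly_pCons comm_ring_hom.hom_simps)

lemma eval2_pCons:
  "comm_ring_hom e \<Longrightarrow> eval2 e (pCons c P) x y = poly (map_poly e c) x + y * eval2 e P x y"
  by (simp add: eval2_def map_poly_pCons comm_ring_hom.hom_simps)

lemma eval2_hom_commute:
  assumes "comm_ring_hom e" "comm_ring_hom h"
  shows "eval2 (\<lambda>c. h (e c)) P (h x) (h y) = h (eval2 e P x y)"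
proof -
  interpret e: comm_ring_hom e by fact
  interpret h: comm_ring_hom h by fact
  have he: "comm_ring_hom (\<lambda>c. h (e c))" by (rule comm_ring_hom_comp[OF assms])
  have "poly (map_poly (\<lambda>c. h (e c)) c) (h x) = h (poly (map_poly e c) x)" for c
    by (induction c) (simp_all add: map_poly_pCons e.hom_simps h.hom_simps)
  then show ?thesis
    by (induction P) (simp_all add: eval2_pCons[OF e.comm_ring_hom_axioms] eval2_pCons[OF he]
        eval2_def[of _ 0] h.hom_simps)
qed


section \<open>Frobenius and \<open>p\<close>-th roots of polynomials\<close>

lemma frobenius_poly:
  fixes V :: "'a::comm_ring_1 poly"
  assumes "prime CHAR('a)"
  shows "V ^ CHAR('a) = pcompose (map_poly (\<lambda>c. c ^ CHAR('a)) V) (monom 1 CHAR('a))"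
proof (induction V)
  case (pCons a V)
  have "pCons a V = [:a:] + monom 1 1 * V" by (simp add: monom_Suc)
  then have "pCons a V ^ CHAR('a) = [:a ^ CHAR('a):] + monom 1 CHAR('a) * V ^ CHAR('a)"
    using assms by (simp add: freshmans_dream power_mult_distrib monom_power poly_const_pow)
  then show ?case
    using pCons.IH assms prime_gt_0_nat
    by (simp add: map_poly_pCons pcompose_pCons zero_power mult.commute)
qed (use assms prime_gt_0_nat in \<open>simp add: zero_power\<close>)

lemma coeff_pcompose_monom:
  fixes r :: "'a::comm_ring_1 poly"
  assumes "p > 0"
  shows "coeff (pcompose r (monom 1 p)) n = (if p dvd n then coeff r (n div p) else 0)"
proof (induction r arbitrary: n)
  case (pCons a r)
  have "coeff (pcompose (pCons a r) (monom 1 p)) n =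
        coeff [:a:] n + (if n < p then 0 else coeff (pcompose r (monom 1 p)) (n - p))"
    by (simp add: pcompose_pCons coeff_monom_mult)
  also have "\<dots> = (if p dvd n then coeff (pCons a r) (n div p) else 0)"
  proof (cases "n = 0")
    case False
    then have a: "coeff [:a:] n = 0" by (cases n) simp_all
    show ?thesis
    proof (cases "n < p")
      case True
      then show ?thesis using a False by (auto dest: dvd_imp_le)
    next
      case ge: False
      then have "n div p = Suc ((n - p) div p)" "p dvd n \<longleftrightarrow> p dvd (n - p)"
        using assms by (simp_all add: le_div_geq dvd_minus_self)
      then show ?thesis using a ge pCons.IH[of "n - p"] by simp
    qed
  qed (use assms in simp)
  finally show ?case .
qed simp

definition pcontract :: "nat \<Rightarrow> 'a::zero poly \<Rightarrow> 'a poly" where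
  "pcontract p q = Poly (map (\<lambda>i. coeff q (p * i)) [0..<Suc (degree q)])"

lemma coeff_pcontract:
  assumes "p > 0" shows "coeff (pcontract p q) i = coeff q (p * i)"
proof (cases "i \<le> degree q")
  case False
  then have "degree q < p * i"
    using assms by (simp add: not_le less_le_trans)
  then show ?thesis using False by (simp add: pcontract_def nth_default_def coeff_eq_0)
qed (simp add: pcontract_def nth_default_def del: upt_Suc)

lemma pcompose_pcontract:
  fixes q :: "'a::comm_ring_1 poly"
  assumes "p > 0" "\<And>n. \<not> p dvd n \<Longrightarrow> coeff q n = 0"
  shows "pcompose (pcontract p q) (monom 1 p) = q"
  by (rule poly_eqI) (use assms in \<open>auto simp: coeff_pcompose_monom coeff_pcontract\<close>)

lemma pth_power_poly_if_coeffs: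
  fixes q :: "'a::idom poly"
  assumes char: "prime CHAR('a)"
    and sparse: "\<And>n. \<not> CHAR('a) dvd n \<Longrightarrow> coeff q n = 0"
    and roots: "\<And>n. \<exists>y. y ^ CHAR('a) = coeff q n"
  obtains r where "q = r ^ CHAR('a)"
proof
  let ?p = "CHAR('a)"
  have p0: "?p > 0" using char prime_gt_0_nat by blast
  define root where "root c = (SOME y. y ^ ?p = c)" for c :: 'a
  have root: "root (coeff q n) ^ ?p = coeff q n" for n
    unfolding root_def using roots by (rule someI_ex)
  have "root 0 ^ ?p = 0" using root[of "Suc (degree q)"] by (simp add: coeff_eq_0)
  then have root0: "root 0 = 0" by simp
  define r where "r = map_poly root (pcontract ?p q)"
  have "map_poly (\<lambda>c. c ^ ?p) r = pcontract ?p q"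
    by (rule poly_eqI) (simp add: r_def coeff_map_poly root0 coeff_pcontract[OF p0] root p0)
  then show "q = r ^ ?p"
    using frobenius_poly[OF char, of r] pcompose_pcontract[OF p0 sparse] by simp
qed

lemma coeff_eq_0_if_pderiv_eq_0:
  fixes q :: "'a::idom poly"
  assumes "pderiv q = 0" "\<not> CHAR('a) dvd n"
  shows "coeff q n = 0"
proof (cases n)
  case (Suc m)
  have "of_nat (Suc m) * coeff q (Suc m) = 0"
    using assms(1) coeff_pderiv[of q m] by simp
  moreover have "of_nat (Suc m) \<noteq> (0::'a)"
    using assms(2) Suc of_nat_eq_0_iff_char_dvd by blast
  ultimately show ?thesis using Suc by simp
qed (use assms in simp)

lemma pth_power_if_pderiv_eq_0:
  fixes q :: "'a::idom poly"
  assumes "prime CHAR('a)" "\<forall>x::'a. \<exists>y. y ^ CHAR('a) = x" "pderiv q = 0"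
  obtains r where "q = r ^ CHAR('a)"
  by (rule pth_power_poly_if_coeffs[OF assms(1)])
    (use assms(2,3) coeff_eq_0_if_pderiv_eq_0 in blast)+

lemma pth_power_if_partials_eq_0:
  fixes W :: "'a::idom poly poly"
  assumes char: "prime CHAR('a)" and perfect: "\<forall>x::'a. \<exists>y. y ^ CHAR('a) = x"
    and "pderiv W = 0" "map_poly pderiv W = 0"
  obtains V where "W = V ^ CHAR('a)"
proof (rule pth_power_poly_if_coeffs)
  show "prime CHAR('a poly)" using char by simp
  show "coeff W n = 0" if "\<not> CHAR('a poly) dvd n" for n
    using coeff_eq_0_if_pderiv_eq_0[of W n] assms(3) that by simp
  show "\<exists>y. y ^ CHAR('a poly) = coeff W n" for n
  proof -
    have "pderiv (coeff W n) = 0"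
      using arg_cong[OF assms(4), of "\<lambda>X. coeff X n"] by (simp add: coeff_map_poly)
    then obtain r where "coeff W n = r ^ CHAR('a)"
      using pth_power_if_pderiv_eq_0 char perfect by blast
    then show ?thesis by auto
  qed
qed (simp)

lemma alg_closed_root:
  assumes "alg_closed TYPE('k::field)" "n > 0"
  shows "\<exists>y::'k. y ^ n = x"
proof -
  let ?q = "monom (1::'k) n + [:- x:]"
  have "degree ?q = n"
    using assms(2) by (subst degree_add_eq_left) (auto simp: degree_monom_eq)
  then have "degree ?q \<ge> 1" using assms(2) by simp
  then obtain y where "poly ?q y = 0"
    using assms(1) unfolding alg_closed_def by blast
  then show ?thesis by (auto simp: poly_monom)
qed


lemma kalg2_eq_range: "kalg2 F G = range (\<lambda>P. eval2 constA P F G)"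
  by (auto simp: kalg2_def)

lemma const_pth_power_mem_kalg2:
  fixes F G :: "'k::comm_ring_1 poly poly"
  assumes char: "prime CHAR('k)" and X: "varX ^ CHAR('k) \<in> kalg2 F G"
  shows "[:c:] ^ CHAR('k) \<in> kalg2 F G"
proof (induction c)
  case 0
  have "[:0:] ^ CHAR('k) = eval2 constA 0 F G"
    using char prime_gt_0_nat comm_ring_hom.hom_zero[OF comm_ring_hom_eval2[OF comm_ring_hom_constA]]
    by (simp add: zero_power)
  then show ?case unfolding kalg2_def by blast
next
  case (pCons x c)
  let ?p = "CHAR('k)"
  interpret E: comm_ring_hom "\<lambda>P. eval2 constA P F G"
    by (rule comm_ring_hom_eval2[OF comm_ring_hom_constA])
  interpret C: comm_ring_hom "\<lambda>c::'k poly. [:c:]" by (rule comm_ring_hom_const_poly)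
  have "pCons x c ^ ?p = ([:x:] + [:0, 1:] * c) ^ ?p" by simp
  also have "\<dots> = [:x:] ^ ?p + ([:0, 1:] * c) ^ ?p"
    by (rule freshmans_dream) (use char in simp_all)
  also have "\<dots> = [:x ^ ?p:] + [:0, 1:] ^ ?p * c ^ ?p"
    by (simp only: power_mult_distrib poly_const_pow)
  finally have "[:pCons x c:] ^ ?p = [:[:x ^ ?p:] + [:0, 1:] ^ ?p * c ^ ?p:]"
    by (simp only: poly_const_pow)
  also have "\<dots> = constA (x ^ ?p) + varX ^ ?p * [:c:] ^ ?p"
    by (simp only: C.hom_add C.hom_mult C.hom_power constA_def varX_def)
  also have "\<dots> \<in> kalg2 F G"
  proof -
    have "constA (x ^ ?p) \<in> range (\<lambda>P. eval2 constA P F G)"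
      using eval2_constA[OF comm_ring_hom_constA] by (metis rangeI)
    then show ?thesis unfolding kalg2_eq_range
      by (rule E.range_add[OF _ E.range_mult[OF X[unfolded kalg2_eq_range] pCons.IH[unfolded kalg2_eq_range]]])
  qed
  finally show ?case .
qed

lemma pth_power_mem_kalg2:
  fixes F G :: "'k::comm_ring_1 poly poly"
  assumes char: "prime CHAR('k)"
    and X: "varX ^ CHAR('k) \<in> kalg2 F G" and Y: "varY \<in> kalg2 F G"
  shows "a ^ CHAR('k) \<in> kalg2 F G"
proof (induction a)
  case 0
  show ?case using const_pth_power_mem_kalg2[OF char X, of 0] by simp
next
  case (pCons c a)
  let ?p = "CHAR('k)"
  interpret E: comm_ring_hom "\<lambda>P. eval2 constA P F G"
    by (rule comm_ring_hom_eval2[OF comm_ring_hom_constA])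
  have "pCons c a ^ ?p = ([:c:] + varY * a) ^ ?p" by (simp add: varY_def)
  also have "\<dots> = [:c:] ^ ?p + varY ^ ?p * a ^ ?p"
    by (subst freshmans_dream) (use char in \<open>simp_all add: power_mult_distrib\<close>)
  also have "\<dots> \<in> kalg2 F G"
    unfolding kalg2_eq_range
    by (rule E.range_add[OF const_pth_power_mem_kalg2[OF char X, unfolded kalg2_eq_range]
          E.range_mult[OF E.range_power[OF Y[unfolded kalg2_eq_range]] pCons.IH[unfolded kalg2_eq_range]]])
  finally show ?case .
qed

lemma fract_cases_to_fract:
  obtains a b where "b \<noteq> 0" "x = to_fract a / to_fract b"
  by (cases x) (auto simp: Fract_conv_to_fract)

lemma purely_inseparable_over_kfield2:
  fixes F G :: "'k::field poly poly"
  assumes "\<And>a. a ^ CHAR('k) \<in> kalg2 F G"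
  shows "purely_inseparable_over (kfield2 (to_fract F) (to_fract G))"
  unfolding purely_inseparable_over_def
proof
  fix x :: "'k poly poly fract"
  let ?e = "\<lambda>c. to_fract (constA c)"
  let ?E = "\<lambda>P. eval2 ?e P (to_fract F) (to_fract G)"
  obtain a b where b: "b \<noteq> 0" and x: "x = to_fract a / to_fract b"
    by (rule fract_cases_to_fract)
  have to_fract_eval2: "to_fract (eval2 constA P F G) = ?E P" for P
    by (rule eval2_hom_commute[OF comm_ring_hom_constA comm_ring_hom_to_fract, symmetric])
  have "a ^ CHAR('k) \<in> kalg2 F G" "b ^ CHAR('k) \<in> kalg2 F G" by (fact assms)+
  then obtain P Q where "a ^ CHAR('k) = eval2 constA P F G" "b ^ CHAR('k) = eval2 constA Q F G"
    unfolding kalg2_def by blast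
  moreover have "b ^ CHAR('k) \<noteq> 0" using b by simp
  ultimately have "x ^ (CHAR('k) ^ 1) = ?E P / ?E Q" "?E Q \<noteq> 0"
    by (simp_all add: x power_divide flip: to_fract_eval2 comm_ring_hom.hom_power[OF comm_ring_hom_to_fract])
  then show "\<exists>n. x ^ (CHAR('k) ^ n) \<in> kfield2 (to_fract F) (to_fract G)"
    unfolding kfield2_def by blast
qed


definition image_quotients :: "('a \<Rightarrow> 'b::field) \<Rightarrow> 'b set" where
  "image_quotients E = {E P / E Q | P Q. E Q \<noteq> 0}"

context
  fixes E :: "'a::comm_ring_1 \<Rightarrow> 'b::field"
  assumes E: "comm_ring_hom E"
begin

interpretation E: comm_ring_hom E by (fact E)

lemma hom_mem_image_quotients: "E P \<in> image_quotients E"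
  unfolding image_quotients_def by (rule CollectI, rule exI[of _ P], rule exI[of _ 1]) (simp add: E.hom_one)

lemma image_quotients_cases:
  assumes "x \<in> image_quotients E"
  obtains P Q where "E Q \<noteq> 0" "x = E P / E Q"
  using assms unfolding image_quotients_def by blast

lemma image_quotients_add:
  assumes "x \<in> image_quotients E" "y \<in> image_quotients E"
  shows "x + y \<in> image_quotients E"
proof -
  obtain P Q P' Q' where "E Q \<noteq> 0" "x = E P / E Q" "E Q' \<noteq> 0" "y = E P' / E Q'"
    using assms by (metis image_quotients_cases)
  then have "x + y = E (P * Q' + P' * Q) / E (Q * Q')" "E (Q * Q') \<noteq> 0"
    by (simp_all add: E.hom_add E.hom_mult field_simps)
  then show ?thesis unfolding image_quotients_def by blast
qed

lemma image_quotients_mult: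
  assumes "x \<in> image_quotients E" "y \<in> image_quotients E"
  shows "x * y \<in> image_quotients E"
proof -
  obtain P Q P' Q' where "E Q \<noteq> 0" "x = E P / E Q" "E Q' \<noteq> 0" "y = E P' / E Q'"
    using assms by (metis image_quotients_cases)
  then have "x * y = E (P * P') / E (Q * Q')" "E (Q * Q') \<noteq> 0"
    by (simp_all add: E.hom_mult)
  then show ?thesis unfolding image_quotients_def by blast
qed

lemma image_quotients_divide:
  assumes "x \<in> image_quotients E" "y \<in> image_quotients E" "y \<noteq> 0"
  shows "x / y \<in> image_quotients E"
proof -
  obtain P Q P' Q' where "E Q \<noteq> 0" "x = E P / E Q" "E Q' \<noteq> 0" "y = E P' / E Q'"
    using assms by (metis image_quotients_cases)
  moreover from this have "E P' \<noteq> 0" using assms(3) by simp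
  ultimately have "x / y = E (P * Q') / E (Q * P')" "E (Q * P') \<noteq> 0"
    by (simp_all add: E.hom_mult)
  then show ?thesis unfolding image_quotients_def by blast
qed

end

lemma image_quotients_eq_UNIV_if_generator:
  fixes E :: "'k::field poly poly \<Rightarrow> 'k poly fract"
  assumes "comm_ring_hom E" "\<And>c. E (constA c) = to_fract [:c:]"
    and "to_fract [:0, 1:] \<in> image_quotients E"
  shows "r \<in> image_quotients E"
proof -
  interpret E: comm_ring_hom E by fact
  have poly: "to_fract a \<in> image_quotients E" for a
  proof (induction a)
    case 0
    show ?case using hom_mem_image_quotients[OF assms(1), of 0] by (simp add: E.hom_zero)
  next
    case (pCons c a)
    have "to_fract (pCons c a) = E (constA c) + to_fract [:0, 1:] * to_fract a"
      by (simp add: assms(2) flip: to_fract_add to_fract_mult)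
    then show ?case
      using image_quotients_add[OF assms(1) hom_mem_image_quotients[OF assms(1)]
          image_quotients_mult[OF assms(1,3) pCons.IH]] by simp
  qed
  obtain a b where "b \<noteq> 0" "r = to_fract a / to_fract b" by (rule fract_cases_to_fract)
  then show ?thesis using image_quotients_divide[OF assms(1)] poly by simp
qed

lemma dvd_iff_hom_eq_0_if_monic:
  fixes \<phi> :: "'a::idom poly \<Rightarrow> 'b::comm_ring_1"
  assumes "comm_ring_hom \<phi>" "lead_coeff H = 1" "\<phi> H = 0"
    and inj: "\<And>r. degree r < degree H \<Longrightarrow> \<phi> r = 0 \<Longrightarrow> r = 0"
  shows "\<phi> P = 0 \<longleftrightarrow> H dvd P"
proof
  interpret \<phi>: comm_ring_hom \<phi> by fact
  have H0: "H \<noteq> 0" using assms(2) by auto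
  obtain q r where qr: "pseudo_divmod P H = (q, r)" by fastforce
  then have "P = H * q + r" using pseudo_divmod(1)[OF H0 qr] assms(2) by simp
  moreover assume "\<phi> P = 0"
  ultimately have "\<phi> r = 0" using assms(3) by (simp add: \<phi>.hom_add \<phi>.hom_mult)
  then have "r = 0" using inj pseudo_divmod(2)[OF H0 qr] by blast
  then show "H dvd P" using \<open>P = H * q + r\<close> by simp
next
  interpret \<phi>: comm_ring_hom \<phi> by fact
  assume "H dvd P"
  then show "\<phi> P = 0" using assms(3) by (auto simp: \<phi>.hom_mult)
qed

lemma prime_elem_if_dvd_iff_hom_eq_0:
  fixes \<phi> :: "'a::comm_ring_1 \<Rightarrow> 'b::idom"
  assumes "comm_ring_hom \<phi>" "H \<noteq> 0" "\<And>P. \<phi> P = 0 \<longleftrightarrow> H dvd P"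
  shows "prime_elem H"
proof -
  interpret \<phi>: comm_ring_hom \<phi> by fact
  have "\<not> H dvd 1" using assms(3)[of 1] by (simp add: \<phi>.hom_one)
  moreover have "H dvd a \<or> H dvd b" if "H dvd a * b" for a b
  proof -
    have "\<phi> a * \<phi> b = 0" using that assms(3)[of "a * b"] by (simp add: \<phi>.hom_mult)
    then show ?thesis using assms(3) by auto
  qed
  ultimately show ?thesis using assms(2) by (simp add: prime_elem_def)
qed

lemma sum_ne_0_if_degrees_distinct:
  fixes T :: "'i \<Rightarrow> 'a::comm_ring_1 poly"
  assumes "finite A" "A \<noteq> {}" "\<And>i. i \<in> A \<Longrightarrow> T i \<noteq> 0" "inj_on (\<lambda>i. degree (T i)) A"
  shows "sum T A \<noteq> 0"
proof -
  define d where "d = Max ((\<lambda>i. degree (T i)) ` A)"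
  have "d \<in> (\<lambda>i. degree (T i)) ` A" unfolding d_def using assms(1,2) by (intro Max_in) auto
  then obtain i0 where i0: "i0 \<in> A" "degree (T i0) = d" by blast
  have "degree (T i) < d" if "i \<in> A" "i \<noteq> i0" for i
  proof -
    have "degree (T i) \<le> d" unfolding d_def using assms(1) that(1) by simp
    moreover have "degree (T i) \<noteq> d" using inj_onD[OF assms(4)] i0 that by metis
    ultimately show ?thesis by simp
  qed
  then have "coeff (sum T A) d = coeff (T i0) d"
    unfolding coeff_sum
    by (subst sum.remove[OF assms(1) i0(1)]) (auto simp: coeff_eq_0 intro!: sum.neutral)
  also have "\<dots> \<noteq> 0" using assms(3)[OF i0(1)] by (simp flip: i0(2))
  finally show ?thesis by auto
qed

lemma coprime_mult_add_eqD:
  fixes m n a b i j :: nat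
  assumes "coprime m n" "i < m" "j < m" "m * a + n * i = m * b + n * j"
  shows "i = j"
proof -
  have "[n * i = n * j] (mod m)"
    using arg_cong[OF assms(4), of "\<lambda>x. x mod m"] by (simp add: cong_def)
  then have "[i = j] (mod m)" using assms(1) by (simp add: cong_mult_lcancel_nat coprime_commute)
  then show ?thesis using assms(2,3) by (simp add: cong_def)
qed

text \<open>The terms \<open>r\<^sub>j(u) v\<^sup>j\<close> of \<open>r(u, v)\<close> have the pairwise distinct degrees
  \<open>deg u \<cdot> deg r\<^sub>j + deg v \<cdot> j\<close> (\<open>j < deg u\<close>), so they cannot cancel.\<close>

lemma eval2_const_poly_eq_0_imp_eq_0:
  fixes r :: "'k::idom poly poly" and u v :: "'k poly"
  assumes coprime: "coprime (degree u) (degree v)" and "degree v > 0" and "degree r < degree u"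
    and "eval2 (\<lambda>c. [:c:]) r u v = 0"
  shows "r = 0"
proof (rule ccontr)
  assume "r \<noteq> 0"
  define T where "T j = pcompose (coeff r j) u * v ^ j" for j
  define S where "S = {j. j \<le> degree r \<and> coeff r j \<noteq> 0}"
  have u: "degree u > 0" using assms(3) by simp
  have "eval2 (\<lambda>c. [:c:]) r u v = poly (map_poly (\<lambda>c. pcompose c u) r) v"
    by (simp add: eval2_def pcompose_altdef)
  also have "\<dots> = (\<Sum>j\<le>degree r. T j)"
    using u by (simp add: poly_altdef degree_map_poly pcompose_eq_0_iff coeff_map_poly T_def)
  also have "\<dots> = sum T S"
    by (rule sum.mono_neutral_right) (auto simp: S_def T_def)
  finally have "sum T S = 0" using assms(4) by simp
  moreover have "T j \<noteq> 0" and degT: "degree (T j) = degree u * degree (coeff r j) + degree v * j"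
    if "j \<in> S" for j
  proof -
    have "pcompose (coeff r j) u \<noteq> 0" "v \<noteq> 0"
      using that u assms(2) by (auto simp: S_def pcompose_eq_0_iff)
    then show "T j \<noteq> 0" "degree (T j) = degree u * degree (coeff r j) + degree v * j"
      by (simp_all add: T_def degree_mult_eq degree_power_eq degree_pcompose)
  qed
  moreover have "inj_on (\<lambda>j. degree (T j)) S"
  proof (rule inj_onI)
    fix i j assume "i \<in> S" "j \<in> S" "degree (T i) = degree (T j)"
    moreover from this have "i < degree u" "j < degree u" using assms(3) by (auto simp: S_def)
    ultimately show "i = j" using coprime_mult_add_eqD[OF coprime] degT by metis
  qed
  moreover have "finite S" "S \<noteq> {}"
    using \<open>r \<noteq> 0\<close> by (auto simp: S_def intro!: exI[of _ "degree r"])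
  ultimately show False using sum_ne_0_if_degrees_distinct[of S T] by blast
qed

lemma degree_fibre_eq:
  fixes c :: "'k::field"
  shows "degree (varX ^ p + varY ^ (p + 1) - constA c) = p + 1"
    and "lead_coeff (varX ^ p + varY ^ (p + 1) - constA c) = 1"
proof -
  have "varX ^ p + varY ^ (p + 1) - constA c = monom 1 (p + 1) + [:[:0, 1:] ^ p - [:c:]:]"
    by (simp add: varX_def varY_def constA_def poly_const_pow monom_altdef)
  moreover have "degree (monom (1::'k poly) (p + 1) + [:[:0, 1:] ^ p - [:c:]:]) = p + 1"
    by (subst degree_add_eq_left) (auto simp: degree_monom_eq)
  ultimately show "degree (varX ^ p + varY ^ (p + 1) - constA c) = p + 1"
    and "lead_coeff (varX ^ p + varY ^ (p + 1) - constA c) = 1"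
    by simp_all
qed

lemma eval2_fibre_parametrisation:
  fixes d :: "'k::field"
  assumes "prime CHAR('k)"
  shows "eval2 (\<lambda>c. [:c:]) (varX ^ CHAR('k) + varY ^ (CHAR('k) + 1) - constA (d ^ CHAR('k)))
           ([:d:] - monom 1 (CHAR('k) + 1)) (monom 1 CHAR('k)) = 0"
proof -
  let ?p = "CHAR('k)"
  have "([:d:] - monom 1 (?p + 1)) ^ ?p = [:d:] ^ ?p + (- monom 1 (?p + 1)) ^ ?p"
    using freshmans_dream[where x = "[:d:]" and y = "- monom 1 (?p + 1)"] assms by simp
  also have "\<dots> = [:d ^ ?p:] - monom 1 ((?p + 1) * ?p)"
    using minus_power_prime_CHAR[where x = "monom (1::'k) (?p + 1)"] assms
    by (simp add: poly_const_pow monom_power)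
  finally show ?thesis
    by (simp add: eval2_varX eval2_varY eval2_constA comm_ring_hom_const_poly
        comm_ring_hom.hom_simps[OF comm_ring_hom_eval2[OF comm_ring_hom_const_poly]]
        monom_power mult_monom mult.commute)
qed

text \<open>The degree conditions make \<open>(H)\<close> the whole kernel of \<open>P \<mapsto> P(u, v)\<close>.\<close>

lemma k_rational_quotient_if_parametrisation:
  fixes H :: "'k::field poly poly" and u v :: "'k poly"
  assumes monic: "lead_coeff H = 1" and zero: "eval2 (\<lambda>c. [:c:]) H u v = 0"
    and degrees: "coprime (degree u) (degree v)" "degree v > 0" "degree H \<le> degree u"
    and generator: "to_fract [:0, 1:] \<in> image_quotients (\<lambda>P. to_fract (eval2 (\<lambda>c. [:c:]) P u v))"
  shows "k_rational_quotient H"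
proof -
  define E where "E = (\<lambda>P. to_fract (eval2 (\<lambda>c. [:c:]) P u v))"
  have hom: "comm_ring_hom (\<lambda>P. eval2 (\<lambda>c. [:c:]) P u v)"
    by (rule comm_ring_hom_eval2[OF comm_ring_hom_const_poly])
  have "r = 0" if "degree r < degree H" "eval2 (\<lambda>c. [:c:]) r u v = 0" for r
    using eval2_const_poly_eq_0_imp_eq_0[OF degrees(1,2)] degrees(3) that by simp
  then have ker: "E P = 0 \<longleftrightarrow> H dvd P" for P
    using dvd_iff_hom_eq_0_if_monic[OF hom monic zero] by (simp add: E_def)
  have "irreducible H"
    using monic ker unfolding E_def
    by (intro prime_elem_imp_irreducible prime_elem_if_dvd_iff_hom_eq_0[OF hom]) auto
  have E_hom: "comm_ring_hom E"
    unfolding E_def by (rule comm_ring_hom_comp[OF hom comm_ring_hom_to_fract])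
  have E_const: "E (constA c) = to_fract [:c:]" for c
    by (simp add: E_def eval2_constA[OF comm_ring_hom_const_poly])
  have E_eval2: "eval2 (\<lambda>c. to_fract [:c:]) P (to_fract u) (to_fract v) = E P" for P
    unfolding E_def by (rule eval2_hom_commute[OF comm_ring_hom_const_poly comm_ring_hom_to_fract])
  have "r \<in> image_quotients E" for r
    using image_quotients_eq_UNIV_if_generator[OF E_hom E_const generator[folded E_def]] .
  then have "\<forall>r. \<exists>P Q. E Q \<noteq> 0 \<and> r = E P / E Q" unfolding image_quotients_def by blast
  with ker \<open>irreducible H\<close> show ?thesis
    unfolding k_rational_quotient_def E_eval2[symmetric] by blast
qed

lemma k_rational_quotient_fibre:
  fixes F :: "'k::field poly poly"
  assumes "alg_closed TYPE('k)" "CHAR('k) = p" "p > 0" "F = varX ^ p + varY ^ (p + 1)"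
  shows "k_rational_quotient (F - constA c)"
proof -
  have char: "prime CHAR('k)" using prime_CHAR_semidom[where 'a = 'k] assms(2,3) by simp
  obtain d :: 'k where d: "d ^ p = c" using alg_closed_root[OF assms(1,3)] by blast
  define u :: "'k poly" where "u = [:d:] - monom 1 (p + 1)"
  define v :: "'k poly" where "v = monom 1 p"
  define \<phi> where "\<phi> P = eval2 (\<lambda>c. [:c:]) P u v" for P
  interpret \<phi>: comm_ring_hom \<phi>
    unfolding \<phi>_def by (rule comm_ring_hom_eval2[OF comm_ring_hom_const_poly])
  have "degree u = p + 1"
    unfolding u_def diff_conv_add_uminus by (subst degree_add_eq_right) (simp_all add: degree_monom_eq)
  moreover have "degree v = p" by (simp add: v_def degree_monom_eq)
  moreover have "\<phi> varX = u" "\<phi> varY = v" "\<phi> (constA d) = [:d:]"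
    by (simp_all add: \<phi>_def eval2_constA eval2_varX eval2_varY comm_ring_hom_const_poly)
  then have "\<phi> (constA d - varX) = monom 1 p * [:0, 1:]" "\<phi> varY = monom 1 p"
    by (simp_all add: \<phi>.hom_diff u_def v_def mult_monom flip: monom_Suc)
  then have "to_fract [:0, 1:] = to_fract (\<phi> (constA d - varX)) / to_fract (\<phi> varY)"
    by (simp only: to_fract_mult) simp
  then have "to_fract [:0, 1:] \<in> image_quotients (\<lambda>P. to_fract (\<phi> P))"
    using \<open>\<phi> varY = monom 1 p\<close> unfolding image_quotients_def by fastforce
  ultimately show ?thesis
    using degree_fibre_eq[of p c] eval2_fibre_parametrisation[OF char, of d] assms(2,3) d
    by (intro k_rational_quotient_if_parametrisation[where u = u and v = v])
      (simp_all add: assms(4) \<phi>_def u_def v_def)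
qed


section \<open>Derivations\<close>

locale derivation =
  fixes D :: "'a::comm_ring_1 \<Rightarrow> 'a"
  assumes add: "D (x + y) = D x + D y"
    and leibniz: "D (x * y) = D x * y + x * D y"
begin

lemma zero: "D 0 = 0"
  using add[of 0 0] by simp

lemma one: "D 1 = 0"
  using leibniz[of 1 1] by simp

end

lemma derivation_pderiv: "derivation (pderiv :: 'a::idom poly \<Rightarrow> _)"
  by unfold_locales (simp_all add: pderiv_add pderiv_mult algebra_simps)

lemma derivation_map_poly_pderiv: "derivation (map_poly pderiv :: 'a::idom poly poly \<Rightarrow> _)"
proof -
  have add: "map_poly pderiv (a + b) = map_poly pderiv a + map_poly pderiv b" for a b :: "'a poly poly"
    by (intro poly_eqI) (simp add: coeff_map_poly pderiv_add)
  have "map_poly pderiv (a * b) = map_poly pderiv a * b + a * map_poly pderiv b" for a b :: "'a poly poly"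
  proof (induction a)
    case (pCons c a)
    have "map_poly pderiv (smult c b) = smult c (map_poly pderiv b) + smult (pderiv c) b"
      by (intro poly_eqI) (simp add: coeff_map_poly pderiv_mult algebra_simps)
    with pCons.IH show ?case
      by (simp add: add map_poly_pCons algebra_simps)
  qed simp
  with add show ?thesis by unfold_locales
qed

lemma derivation_eval2_inner:
  assumes "derivation D" "comm_ring_hom e" "\<And>c. D (e c) = 0"
  shows "D (poly (map_poly e c) x) = poly (map_poly e (pderiv c)) x * D x"
proof (induction c)
  case (pCons a c)
  interpret D: derivation D by fact
  interpret e: comm_ring_hom e by fact
  show ?case
    using pCons.IH assms(3)
    by (simp add: map_poly_pCons pderiv_pCons e.hom_simps e.map_poly_hom_add D.add D.leibniz
        algebra_simps)
qed (use assms in \<open>simp add: derivation.zero comm_ring_hom.hom_zero\<close>)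

text \<open>\<open>map_poly pderiv\<close> and \<open>pderiv\<close> are the partial derivatives of a bivariate polynomial
  with respect to its first (inner) and its second (outer) variable.\<close>

lemma derivation_eval2:
  assumes "derivation D" "comm_ring_hom e" "\<And>c. D (e c) = 0"
  shows "D (eval2 e P x y) = eval2 e (map_poly pderiv P) x y * D x + eval2 e (pderiv P) x y * D y"
proof (induction P)
  case (pCons c P)
  interpret D: derivation D by fact
  interpret e: comm_ring_hom e by fact
  interpret E: comm_ring_hom "\<lambda>P. eval2 e P x y" by (rule comm_ring_hom_eval2[OF assms(2)])
  show ?case
    using pCons.IH derivation_eval2_inner[OF assms]
    by (simp add: eval2_pCons[OF assms(2)] map_poly_pCons pderiv_pCons E.hom_add D.add D.leibniz
        algebra_simps)
qed (use assms in \<open>simp add: derivation.zero eval2_def\<close>)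

text \<open>The quotient rule, evaluated at an arbitrary representative \<open>a / b\<close>; by
  \<open>quotient_rule_well_defined\<close> the choice does not matter.\<close>

definition fract_derivation :: "('a::idom \<Rightarrow> 'a) \<Rightarrow> 'a fract \<Rightarrow> 'a fract" where
  "fract_derivation D x = (SOME y. \<exists>a b. b \<noteq> 0 \<and> x = to_fract a / to_fract b \<and>
      y = (to_fract (D a) * to_fract b - to_fract a * to_fract (D b)) / to_fract b ^ 2)"

lemma quotient_rule_well_defined:
  fixes a b a' b' :: "'a::idom"
  assumes "derivation D" "b \<noteq> 0" "b' \<noteq> 0" "to_fract a / to_fract b = to_fract a' / to_fract b'"
  shows "(to_fract (D a) * to_fract b - to_fract a * to_fract (D b)) / to_fract b ^ 2 =
         (to_fract (D a') * to_fract b' - to_fract a' * to_fract (D b')) / to_fract b' ^ 2"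
proof -
  interpret D: derivation D by fact
  have "to_fract (a * b') = to_fract (a' * b)" using assms(2-4) by (simp add: field_simps)
  then have ab: "a * b' = a' * b" by (simp only: to_fract_eq_iff)
  then have "D a * b' + a * D b' = D a' * b + a' * D b"
    using D.leibniz by metis
  then have Dab: "D a * b' - D a' * b = a' * D b - a * D b'" by (simp add: algebra_simps)
  have "(D a * b - a * D b) * b' ^ 2 - (D a' * b' - a' * D b') * b ^ 2
      = b * b' * (D a * b' - D a' * b) - a * b' ^ 2 * D b + a' * b ^ 2 * D b'"
    by (simp add: algebra_simps power2_eq_square)
  also have "\<dots> = (D b * b' + D b' * b) * (a' * b - a * b')"
    unfolding Dab by (simp add: algebra_simps power2_eq_square)
  finally have "(D a * b - a * D b) * b' ^ 2 = (D a' * b' - a' * D b') * b ^ 2"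
    using ab by simp
  then have "to_fract ((D a * b - a * D b) * b' ^ 2) = to_fract ((D a' * b' - a' * D b') * b ^ 2)"
    by simp
  then show ?thesis
    using assms(2,3) by (simp add: field_simps comm_ring_hom.hom_power[OF comm_ring_hom_to_fract])
qed

lemma fract_derivation_quotient:
  assumes "derivation D" "b \<noteq> 0"
  shows "fract_derivation D (to_fract a / to_fract b) =
           (to_fract (D a) * to_fract b - to_fract a * to_fract (D b)) / to_fract b ^ 2"
proof -
  let ?x = "to_fract a / to_fract b"
  let ?P = "\<lambda>y. \<exists>a' b'. b' \<noteq> 0 \<and> ?x = to_fract a' / to_fract b' \<and>
      y = (to_fract (D a') * to_fract b' - to_fract a' * to_fract (D b')) / to_fract b' ^ 2"
  have "?P (fract_derivation D ?x)"
    unfolding fract_derivation_def by (rule someI[of ?P]) (use assms(2) in blast)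
  then show ?thesis using quotient_rule_well_defined[OF assms(1) _ assms(2)] by metis
qed

lemma fract_derivation_to_fract: "derivation D \<Longrightarrow> fract_derivation D (to_fract a) = to_fract (D a)"
  using fract_derivation_quotient[of D 1 a] by (simp add: derivation.one)

lemma derivation_fract_derivation:
  assumes "derivation D" shows "derivation (fract_derivation D)"
proof
  interpret D: derivation D by fact
  fix x y :: "'a fract"
  obtain a b where b: "b \<noteq> 0" and x: "x = to_fract a / to_fract b" by (rule fract_cases_to_fract)
  obtain c e where e: "e \<noteq> 0" and y: "y = to_fract c / to_fract e" by (rule fract_cases_to_fract)
  have be: "b * e \<noteq> 0" using b e by simp
  note quotient = fract_derivation_quotient[OF assms]
  have sum: "x + y = to_fract (a * e + c * b) / to_fract (b * e)"
    using b e by (simp add: x y field_simps)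
  have "fract_derivation D (x + y) =
      (to_fract (D (a * e + c * b)) * to_fract (b * e) - to_fract (a * e + c * b) * to_fract (D (b * e)))
      / to_fract (b * e) ^ 2"
    by (simp only: sum quotient[OF be])
  also have "\<dots> = fract_derivation D x + fract_derivation D y"
    unfolding x y quotient[OF b] quotient[OF e] using b e
    by (simp add: D.add D.leibniz field_simps power2_eq_square)
  finally show "fract_derivation D (x + y) = fract_derivation D x + fract_derivation D y" .
  have prod: "x * y = to_fract (a * c) / to_fract (b * e)" using b e by (simp add: x y)
  have "fract_derivation D (x * y) =
      (to_fract (D (a * c)) * to_fract (b * e) - to_fract (a * c) * to_fract (D (b * e)))
      / to_fract (b * e) ^ 2"
    by (simp only: prod quotient[OF be])
  also have "\<dots> = fract_derivation D x * y + x * fract_derivation D y"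
    unfolding x y quotient[OF b] quotient[OF e] using b e
    by (simp add: D.leibniz field_simps power2_eq_square)
  finally show "fract_derivation D (x * y) = fract_derivation D x * y + x * fract_derivation D y" .
qed


section \<open>Algebraic independence from a non-vanishing Jacobian\<close>

definition max_coeff_degree :: "'a::zero poly poly \<Rightarrow> nat" where
  "max_coeff_degree W = Max ((\<lambda>j. degree (coeff W j)) ` {..degree W})"

definition bidegree :: "'a::zero poly poly \<Rightarrow> nat" where
  "bidegree W = degree W + max_coeff_degree W"

lemma degree_coeff_le_max_coeff_degree: "degree (coeff W j) \<le> max_coeff_degree W"
proof (cases "j \<le> degree W")
  case True
  then show ?thesis unfolding max_coeff_degree_def by (intro Max_ge) auto
qed (simp add: coeff_eq_0)

lemma max_coeff_degree_le: "(\<And>j. degree (coeff W j) \<le> m) \<Longrightarrow> max_coeff_degree W \<le> m"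
  unfolding max_coeff_degree_def by (subst Max_le_iff) auto

lemma degree_pderiv_le: "degree (pderiv q) \<le> degree q - 1"
  by (rule degree_le) (auto simp: coeff_pderiv coeff_eq_0)

lemma degree_pos_if_pderiv_ne_0: "pderiv q \<noteq> 0 \<Longrightarrow> degree q > 0"
  by (metis gr0I degree_eq_zeroE pderiv_singleton)

lemma bidegree_pderiv_less:
  fixes W :: "'a::idom poly poly"
  assumes "pderiv W \<noteq> 0"
  shows "bidegree (pderiv W) < bidegree W"
proof -
  have "max_coeff_degree (pderiv W) \<le> max_coeff_degree W"
  proof (rule max_coeff_degree_le)
    fix j
    have "degree (coeff (pderiv W) j) \<le> degree (coeff W (Suc j))"
      by (simp add: coeff_pderiv of_nat_poly)
    also have "\<dots> \<le> max_coeff_degree W" by (rule degree_coeff_le_max_coeff_degree)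
    finally show "degree (coeff (pderiv W) j) \<le> max_coeff_degree W" .
  qed
  then show ?thesis
    using degree_pderiv_le[of W] degree_pos_if_pderiv_ne_0[OF assms] unfolding bidegree_def by linarith
qed

lemma bidegree_map_poly_pderiv_less:
  fixes W :: "'a::idom poly poly"
  assumes "map_poly pderiv W \<noteq> 0"
  shows "bidegree (map_poly pderiv W) < bidegree W"
proof -
  obtain j where "coeff (map_poly pderiv W) j \<noteq> 0" using assms by (metis leading_coeff_0_iff)
  then have "degree (coeff W j) > 0"
    by (intro degree_pos_if_pderiv_ne_0) (simp add: coeff_map_poly)
  then have pos: "max_coeff_degree W > 0"
    using degree_coeff_le_max_coeff_degree[of W j] by linarith
  have "max_coeff_degree (map_poly pderiv W) \<le> max_coeff_degree W - 1"
  proof (rule max_coeff_degree_le)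
    fix i
    have "degree (coeff (map_poly pderiv W) i) \<le> degree (coeff W i) - 1"
      using degree_pderiv_le by (simp add: coeff_map_poly)
    then show "degree (coeff (map_poly pderiv W) i) \<le> max_coeff_degree W - 1"
      using degree_coeff_le_max_coeff_degree[of W i] by linarith
  qed
  then show ?thesis
    using map_poly_degree_leq[of pderiv W] pos unfolding bidegree_def by linarith
qed

lemma bidegree_pth_power:
  fixes V :: "'a::idom poly poly"
  assumes "prime CHAR('a)"
  shows "CHAR('a) * bidegree V \<le> bidegree (V ^ CHAR('a))"
proof (cases "V = 0")
  case False
  let ?p = "CHAR('a)"
  have p0: "?p > 0" using assms prime_gt_0_nat by blast
  have coeff: "coeff (V ^ ?p) (?p * j) = coeff V j ^ ?p" for j
    using frobenius_poly[of V] assms p0 by (simp add: coeff_pcompose_monom coeff_map_poly zero_power)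
  have "max_coeff_degree V \<le> max_coeff_degree (V ^ ?p) div ?p"
  proof (rule max_coeff_degree_le)
    fix j
    have "?p * degree (coeff V j) = degree (coeff (V ^ ?p) (?p * j))"
      using p0 by (cases "coeff V j = 0") (simp_all add: coeff degree_power_eq zero_power)
    also have "\<dots> \<le> max_coeff_degree (V ^ ?p)" by (rule degree_coeff_le_max_coeff_degree)
    finally show "degree (coeff V j) \<le> max_coeff_degree (V ^ ?p) div ?p"
      using p0 by (simp add: less_eq_div_iff_mult_less_eq mult.commute)
  qed
  then have "?p * max_coeff_degree V \<le> max_coeff_degree (V ^ ?p)"
    using p0 by (simp add: less_eq_div_iff_mult_less_eq mult.commute)
  then show ?thesis
    using False by (simp add: bidegree_def degree_power_eq algebra_simps)
qed (simp add: bidegree_def max_coeff_degree_def)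

lemma eval2_eq_0_imp_eq_0_if_bidegree_eq_0:
  fixes e :: "'k::field \<Rightarrow> 'b::idom"
  assumes "comm_ring_hom e" "bidegree W = 0" "eval2 e W f g = 0"
  shows "W = 0"
proof -
  define c where "c = coeff (coeff W 0) 0"
  have "degree W = 0" "degree (coeff W 0) = 0"
    using assms(2) degree_coeff_le_max_coeff_degree[of W 0] unfolding bidegree_def by simp_all
  then have W: "W = constA c" unfolding c_def constA_def by (metis degree_0_id)
  then have "e c = 0" using assms(3) eval2_constA[OF assms(1)] by simp
  then have "c = 0"
    using comm_ring_hom.hom_mult[OF assms(1), of c "inverse c"] comm_ring_hom.hom_one[OF assms(1)]
    by (cases "c = 0") simp_all
  then show ?thesis using W by (simp add: constA_def)
qed

lemma eval2_partials_eq_0_if_jacobian: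
  fixes e :: "'a::idom \<Rightarrow> 'b::idom"
  assumes e: "comm_ring_hom e"
    and D1: "derivation D1" "\<And>c. D1 (e c) = 0" and D2: "derivation D2" "\<And>c. D2 (e c) = 0"
    and jacobian: "D1 f * D2 g \<noteq> D2 f * D1 g"
    and "eval2 e W f g = 0"
  shows "eval2 e (map_poly pderiv W) f g = 0" "eval2 e (pderiv W) f g = 0"
proof -
  let ?a = "eval2 e (map_poly pderiv W) f g" and ?b = "eval2 e (pderiv W) f g"
  have "?a * D1 f + ?b * D1 g = D1 (eval2 e W f g)"
    by (simp add: derivation_eval2[OF D1(1) e D1(2)])
  then have 1: "?a * D1 f + ?b * D1 g = 0" by (simp add: assms(7) derivation.zero[OF D1(1)])
  have "?a * D2 f + ?b * D2 g = D2 (eval2 e W f g)"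
    by (simp add: derivation_eval2[OF D2(1) e D2(2)])
  then have 2: "?a * D2 f + ?b * D2 g = 0" by (simp add: assms(7) derivation.zero[OF D2(1)])
  have "?a * (D1 f * D2 g - D2 f * D1 g) = (?a * D1 f + ?b * D1 g) * D2 g - (?a * D2 f + ?b * D2 g) * D1 g"
    and "?b * (D1 f * D2 g - D2 f * D1 g) = (?a * D2 f + ?b * D2 g) * D1 f - (?a * D1 f + ?b * D1 g) * D2 f"
    by (simp_all add: algebra_simps)
  then have "?a * (D1 f * D2 g - D2 f * D1 g) = 0" "?b * (D1 f * D2 g - D2 f * D1 g) = 0"
    unfolding 1 2 by simp_all
  then show "?a = 0" "?b = 0" using jacobian by simp_all
qed

text \<open>In characteristic \<open>p\<close> a relation whose partial derivatives both vanish is a \<open>p\<close>-th power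
  over a perfect field, so a relation of least bidegree cannot exist.\<close>

theorem eval2_eq_0_imp_eq_0_if_jacobian:
  fixes e :: "'k::field \<Rightarrow> 'b::idom" and W :: "'k poly poly"
  assumes e: "comm_ring_hom e"
    and D1: "derivation D1" "\<And>c. D1 (e c) = 0" and D2: "derivation D2" "\<And>c. D2 (e c) = 0"
    and jacobian: "D1 f * D2 g \<noteq> D2 f * D1 g"
    and char: "CHAR('k) > 0" and perfect: "\<forall>x::'k. \<exists>y. y ^ CHAR('k) = x"
    and "eval2 e W f g = 0"
  shows "W = 0"
  using assms(9)
proof (induction "bidegree W" arbitrary: W rule: less_induct)
  case less
  interpret E: comm_ring_hom "\<lambda>W. eval2 e W f g" by (rule comm_ring_hom_eval2[OF e])
  have prime: "prime CHAR('k)" using prime_CHAR_semidom[where 'a = 'k] char by simp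
  note partials = eval2_partials_eq_0_if_jacobian[OF e D1 D2 jacobian less.prems]
  have "pderiv W = 0"
    using less.hyps[OF bidegree_pderiv_less] partials(2) by blast
  moreover have "map_poly pderiv W = 0"
    using less.hyps[OF bidegree_map_poly_pderiv_less] partials(1) by blast
  ultimately obtain V where V: "W = V ^ CHAR('k)"
    using pth_power_if_partials_eq_0 prime perfect by blast
  show "W = 0"
  proof (cases "bidegree W = 0")
    case True
    then show ?thesis using eval2_eq_0_imp_eq_0_if_bidegree_eq_0[OF e] less.prems by blast
  next
    case False
    have "CHAR('k) * bidegree V \<le> bidegree W"
      using bidegree_pth_power[of V] prime by (simp add: V)
    moreover have "2 * bidegree V \<le> CHAR('k) * bidegree V"
      using prime_ge_2_nat[OF prime] by simp
    ultimately have "bidegree V < bidegree W" using False by linarith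
    moreover have "eval2 e V f g = 0" using less.prems by (simp add: V E.hom_power)
    ultimately have "V = 0" using less.hyps by blast
    then show ?thesis using V char by (simp add: zero_power)
  qed
qed


lemma power_ne_smult_pderiv:
  fixes q :: "'a::idom poly"
  assumes "q \<noteq> 0" "n \<ge> 2"
  shows "q ^ n \<noteq> smult a (pderiv q)"
proof
  assume eq: "q ^ n = smult a (pderiv q)"
  then have "pderiv q \<noteq> 0" using assms(1) by auto
  then have "degree q > 0" by (rule degree_pos_if_pderiv_ne_0)
  have "n * degree q = degree (smult a (pderiv q))" using eq assms(1) by (simp flip: degree_power_eq)
  also have "\<dots> \<le> degree q - 1" using degree_pderiv_le[of q] by (simp add: le_trans[OF degree_smult_le])
  moreover have "degree q \<le> n * degree q" using assms(2) by simp
  ultimately show False using \<open>degree q > 0\<close> by linarith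
qed

lemma power_eq_power_mult_wronskian_cancel:
  fixes l q r :: "'a::idom poly"
  assumes "pderiv l = 1"
  shows "(l * q) ^ (p + 2) = (l * r) ^ p * ((l * q) * pderiv (l * r) - (l * r) * pderiv (l * q))
     \<longleftrightarrow> q ^ (p + 2) = r ^ p * (q * pderiv r - r * pderiv q)"
proof -
  have "l \<noteq> 0" using assms by auto
  have "(l * q) * pderiv (l * r) - (l * r) * pderiv (l * q) = l ^ 2 * (q * pderiv r - r * pderiv q)"
    using assms by (simp add: pderiv_mult algebra_simps power2_eq_square)
  then have rhs: "(l * r) ^ p * ((l * q) * pderiv (l * r) - (l * r) * pderiv (l * q)) =
      l ^ (p + 2) * (r ^ p * (q * pderiv r - r * pderiv q))"
    by (simp only: power_mult_distrib power_add mult_ac)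
  have lhs: "(l * q) ^ (p + 2) = l ^ (p + 2) * q ^ (p + 2)" by (rule power_mult_distrib)
  show ?thesis
    unfolding lhs rhs by (rule mult_left_cancel[OF power_not_zero[OF \<open>l \<noteq> 0\<close>]])
qed

lemma power_ne_power_mult_wronskian:
  fixes q r :: "'k::field poly"
  assumes "alg_closed TYPE('k)" "p > 0" "q \<noteq> 0"
  shows "q ^ (p + 2) \<noteq> r ^ p * (q * pderiv r - r * pderiv q)"
  using assms(3)
proof (induction "degree q" arbitrary: q r rule: less_induct)
  case less
  show ?case
  proof
    assume eq: "q ^ (p + 2) = r ^ p * (q * pderiv r - r * pderiv q)"
    show False
    proof (cases "degree r = 0")
      case True
      then obtain c where "r = [:c:]" by (rule degree_eq_zeroE)
      then have "q ^ (p + 2) = smult (- (c ^ (p + 1))) (pderiv q)"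
        using eq by (simp add: poly_const_pow algebra_simps)
      then show False using power_ne_smult_pderiv[OF less.prems le_add2] by blast
    next
      case False
      then have "degree r \<ge> 1" by simp
      then obtain a where "poly r a = 0" using assms(1) unfolding alg_closed_def by blast
      moreover from this have "poly q a = 0"
        using arg_cong[OF eq, of "\<lambda>s. poly s a"] assms(2) by (simp add: zero_power)
      ultimately obtain q' r' where q': "q = [:- a, 1:] * q'" and r': "r = [:- a, 1:] * r'"
        by (metis dvdE poly_eq_0_iff_dvd)
      have l: "pderiv [:- a, 1:] = 1" by (simp add: pderiv_pCons)
      have "q' ^ (p + 2) = r' ^ p * (q' * pderiv r' - r' * pderiv q')"
        using eq unfolding q' r' power_eq_power_mult_wronskian_cancel[OF l] .
      moreover have "q' \<noteq> 0" using less.prems q' by auto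
      moreover have "degree q = 1 + degree q'"
        unfolding q' using \<open>q' \<noteq> 0\<close> by (subst degree_mult_eq) simp_all
      ultimately show False using less.hyps by fastforce
    qed
  qed
qed

lemma alg_closed_infinite:
  assumes "alg_closed TYPE('k::field)" shows "infinite (UNIV :: 'k set)"
proof
  assume fin: "finite (UNIV :: 'k set)"
  define P where "P = (\<Prod>a\<in>(UNIV::'k set). [:- a, 1:]) + 1"
  have "degree (\<Prod>a\<in>(UNIV::'k set). [:- a, 1:]) = card (UNIV :: 'k set)"
    by (subst degree_prod_eq_sum_degree) auto
  moreover have "card (UNIV :: 'k set) \<ge> 1" using fin by (simp add: Suc_leI finite_UNIV_card_ge_0)
  ultimately have "degree P \<ge> 1" unfolding P_def by (subst degree_add_eq_left) auto
  then obtain x where "poly P x = 0" using assms unfolding alg_closed_def by blast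
  moreover have "poly (\<Prod>a\<in>(UNIV::'k set). [:- a, 1:]) x = 0" using fin by (simp add: poly_prod)
  ultimately show False unfolding P_def by simp
qed

lemma exists_poly_const_ne_0:
  fixes Q :: "'k::idom poly poly"
  assumes "infinite (UNIV :: 'k set)" "Q \<noteq> 0"
  obtains b where "poly Q [:b:] \<noteq> 0"
proof -
  obtain j where "coeff Q j \<noteq> 0" using assms(2) by (metis leading_coeff_0_iff)
  then obtain i where "coeff (coeff Q j) i \<noteq> 0" by (metis leading_coeff_0_iff)
  define h where "h = map_poly (\<lambda>c. coeff c i) Q"
  have "coeff h j \<noteq> 0" unfolding h_def using \<open>coeff (coeff Q j) i \<noteq> 0\<close> by (simp add: coeff_map_poly)
  then have "finite {x. poly h x = 0}" by (intro poly_roots_finite) auto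
  then obtain b where "poly h b \<noteq> 0"
    using assms(1) by (metis (mono_tags) UNIV_I ex_new_if_finite mem_Collect_eq)
  moreover have "coeff (poly Q [:b:]) i = poly h b"
    unfolding h_def by (induction Q) (simp_all add: map_poly_pCons)
  ultimately have "poly Q [:b:] \<noteq> 0" by auto
  then show ?thesis by (rule that)
qed

lemma poly_map_poly_pderiv_const: "poly (map_poly pderiv W) [:b:] = pderiv (poly W [:b:])"
  by (induction W) (simp_all add: map_poly_pCons pderiv_add pderiv_mult pderiv_smult)

lemma relation_poly_ne_0:
  fixes P Q :: "'k::field poly poly"
  assumes "alg_closed TYPE('k)" "p > 0" "Q \<noteq> 0"
  shows "Q ^ (p + 2) + P ^ (p + 1) * map_poly pderiv Q - P ^ p * Q * map_poly pderiv P \<noteq> 0"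
proof
  assume rel: "Q ^ (p + 2) + P ^ (p + 1) * map_poly pderiv Q - P ^ p * Q * map_poly pderiv P = 0"
  obtain b where "poly Q [:b:] \<noteq> 0"
    using exists_poly_const_ne_0[OF alg_closed_infinite[OF assms(1)] assms(3)] by blast
  define q r where "q = poly Q [:b:]" and "r = poly P [:b:]"
  have "q ^ (p + 2) + r ^ (p + 1) * pderiv q - r ^ p * q * pderiv r = 0"
    using arg_cong[OF rel, of "\<lambda>W. poly W [:b:]"]
    by (simp add: q_def r_def poly_map_poly_pderiv_const)
  then have "q ^ (p + 2) = r ^ p * (q * pderiv r - r * pderiv q)"
    by (simp add: algebra_simps)
  then show False
    using power_ne_power_mult_wronskian[OF assms(1,2)] \<open>poly Q [:b:] \<noteq> 0\<close> q_def by blast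
qed

text \<open>If \<open>y = P(f,g)/Q(f,g)\<close> where \<open>\<partial>\<^sub>1 f = 0\<close>, \<open>\<partial>\<^sub>2 f = y\<^sup>p\<close> and \<open>\<partial>\<^sub>1 y = 0\<close>, \<open>\<partial>\<^sub>2 y = 1\<close>,
  differentiating \<open>y Q(f,g) = P(f,g)\<close> once in each direction eliminates \<open>g\<close> and \<open>y\<close> and leaves
  a polynomial relation between \<open>f\<close> and \<open>g\<close>.\<close>

lemma eval2_relation_eq_0:
  fixes e :: "'a::idom \<Rightarrow> 'b::idom"
  assumes e: "comm_ring_hom e"
    and D1: "derivation D1" "\<And>c. D1 (e c) = 0" and D2: "derivation D2" "\<And>c. D2 (e c) = 0"
    and f: "D1 f = 0" "D2 f = y ^ p" and y: "D1 y = 0" "D2 y = 1" and g: "D1 g \<noteq> 0"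
    and PQ: "y * eval2 e Q f g = eval2 e P f g"
  shows "eval2 e (Q ^ (p + 2) + P ^ (p + 1) * map_poly pderiv Q - P ^ p * Q * map_poly pderiv P) f g = 0"
proof -
  interpret D1: derivation D1 by fact
  interpret D2: derivation D2 by fact
  interpret E: comm_ring_hom "\<lambda>P. eval2 e P f g" by (rule comm_ring_hom_eval2[OF e])
  let ?E = "\<lambda>P. eval2 e P f g"
  have chain1: "D1 (?E V) = ?E (pderiv V) * D1 g" for V
    using derivation_eval2[OF D1(1) e D1(2)] f(1) by simp
  have chain2: "D2 (?E V) = ?E (map_poly pderiv V) * y ^ p + ?E (pderiv V) * D2 g" for V
    using derivation_eval2[OF D2(1) e D2(2)] f(2) by simp
  have "y * ?E (pderiv Q) * D1 g = ?E (pderiv P) * D1 g"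
    using arg_cong[OF PQ, of D1] by (simp add: D1.leibniz y chain1 mult.assoc)
  then have dQ: "y * ?E (pderiv Q) = ?E (pderiv P)" using g by simp
  have "?E Q + y * (?E (map_poly pderiv Q) * y ^ p + ?E (pderiv Q) * D2 g) =
        ?E (map_poly pderiv P) * y ^ p + ?E (pderiv P) * D2 g"
    using arg_cong[OF PQ, of D2] by (simp add: D2.leibniz y chain2)
  then have rel: "?E Q + y ^ (p + 1) * ?E (map_poly pderiv Q) = y ^ p * ?E (map_poly pderiv P)"
    by (simp add: algebra_simps flip: dQ)
  have "?E (Q ^ (p + 2) + P ^ (p + 1) * map_poly pderiv Q - P ^ p * Q * map_poly pderiv P) =
        ?E Q ^ (p + 1) * (?E Q + y ^ (p + 1) * ?E (map_poly pderiv Q) - y ^ p * ?E (map_poly pderiv P))"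
    by (simp add: E.hom_simps flip: PQ) (simp add: algebra_simps)
  then show ?thesis by (simp only: rel diff_self mult_zero_right)
qed

lemma partial_derivatives_varX_varY:
  "map_poly pderiv (varX :: 'a::idom poly poly) = 1" "map_poly pderiv (varY :: 'a poly poly) = 0"
  "pderiv (varY :: 'a poly poly) = 1"
  by (simp_all add: varX_def varY_def map_poly_pCons pderiv_pCons one_pCons)

lemma partial_derivatives_X_pow_plus_Y_pow:
  assumes "CHAR('k::field) = p"
  shows "map_poly pderiv (varX ^ p + varY ^ (p + 1) :: 'k poly poly) = 0"
    and "pderiv (varX ^ p + varY ^ (p + 1) :: 'k poly poly) = varY ^ p"
proof -
  have p: "of_nat p = (0::'k)" using of_nat_CHAR[where 'a = 'k] assms by simp
  have X: "varX ^ p = [:[:0, 1::'k:] ^ p:]" and Y: "varY ^ n = monom (1::'k poly) n" for n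
    by (simp_all add: varX_def varY_def poly_const_pow monom_altdef)
  show "map_poly pderiv (varX ^ p + varY ^ (p + 1) :: 'k poly poly) = 0"
    by (simp only: X Y derivation.add[OF derivation_map_poly_pderiv])
      (simp add: map_poly_monom map_poly_pCons pderiv_power p)
  show "pderiv (varX ^ p + varY ^ (p + 1) :: 'k poly poly) = varY ^ p"
    by (simp only: X Y pderiv_add) (simp add: pderiv_monom of_nat_poly p)
qed

lemma fract_partial_derivatives:
  shows "derivation (fract_derivation (map_poly pderiv :: 'a::idom poly poly \<Rightarrow> _))"
    and "derivation (fract_derivation (pderiv :: 'a poly poly \<Rightarrow> _))"
    and "fract_derivation (map_poly pderiv) (to_fract a) = to_fract (map_poly pderiv a)"
    and "fract_derivation pderiv (to_fract a) = to_fract (pderiv a)"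
    and "fract_derivation (map_poly pderiv) (to_fract (constA c)) = 0"
    and "fract_derivation pderiv (to_fract (constA c)) = 0"
  by (simp_all add: derivation_fract_derivation derivation_map_poly_pderiv derivation_pderiv
      fract_derivation_to_fract constA_def map_poly_pCons)

lemma derivation_ne_0_if_generator:
  fixes e :: "'a::idom \<Rightarrow> 'b::idom"
  assumes e: "comm_ring_hom e" and D: "derivation D" "\<And>c. D (e c) = 0"
    and "D f = 0" "D x \<noteq> 0"
    and "x * eval2 e Q f g = eval2 e P f g" "eval2 e Q f g \<noteq> 0"
  shows "D g \<noteq> 0"
proof
  assume "D g = 0"
  then have D_eval2: "D (eval2 e V f g) = 0" for V
    using derivation_eval2[OF D(1) e D(2)] assms(4) by simp
  have "D x * eval2 e Q f g = D (x * eval2 e Q f g)"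
    by (simp add: derivation.leibniz[OF D(1)] D_eval2)
  also have "\<dots> = 0" by (simp add: assms(6) D_eval2)
  finally show False using assms(5,7) by simp
qed

lemma not_field_generator_X_pow_plus_Y_pow:
  fixes F :: "'k::field poly poly"
  assumes ac: "alg_closed TYPE('k)" and char: "CHAR('k) = p" "p > 0"
    and F: "F = varX ^ p + varY ^ (p + 1)"
  shows "\<not> field_generator F"
proof
  assume "field_generator F"
  then obtain G where G: "kfield2 (to_fract F) G = UNIV" unfolding field_generator_def by blast
  define e where "e c = to_fract (constA c)" for c :: 'k
  let ?D1 = "fract_derivation (map_poly pderiv :: 'k poly poly \<Rightarrow> _)"
    and ?D2 = "fract_derivation (pderiv :: 'k poly poly \<Rightarrow> _)"
  let ?E = "\<lambda>P. eval2 e P (to_fract F) G"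
  let ?x = "to_fract varX :: 'k poly poly fract" and ?y = "to_fract varY :: 'k poly poly fract"
  have e: "comm_ring_hom e"
    unfolding e_def by (rule comm_ring_hom_comp[OF comm_ring_hom_constA comm_ring_hom_to_fract])
  have D1: "derivation ?D1" "\<And>c. ?D1 (e c) = 0" and D2: "derivation ?D2" "\<And>c. ?D2 (e c) = 0"
    by (simp_all add: e_def fract_partial_derivatives(1,2,5,6))
  have f: "?D1 (to_fract F) = 0" "?D2 (to_fract F) = ?y ^ p"
    unfolding F fract_partial_derivatives partial_derivatives_X_pow_plus_Y_pow[OF char(1)]
    by (simp_all add: comm_ring_hom.hom_power[OF comm_ring_hom_to_fract])
  have xy: "?D1 ?x = 1" "?D1 ?y = 0" "?D2 ?y = 1"
    by (simp_all add: fract_partial_derivatives partial_derivatives_varX_varY)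
  have quotient: "\<exists>P Q. ?E Q \<noteq> 0 \<and> z = ?E P / ?E Q" for z
    using G unfolding kfield2_def e_def by blast
  have "?D1 G \<noteq> 0"
  proof -
    obtain P Q where PQ: "?E Q \<noteq> 0" "?x = ?E P / ?E Q" using quotient by blast
    have "?D1 ?x \<noteq> 0" using xy(1) by simp
    moreover have "?x * ?E Q = ?E P" using PQ by simp
    ultimately show ?thesis
      using PQ(1) by (rule derivation_ne_0_if_generator[OF e D1 f(1)])
  qed
  moreover have "?y \<noteq> 0" by (simp add: varY_def)
  ultimately have jacobian: "?D1 (to_fract F) * ?D2 G \<noteq> ?D2 (to_fract F) * ?D1 G"
    using f by simp
  obtain P Q where PQ: "?E Q \<noteq> 0" "?y = ?E P / ?E Q" using quotient by blast
  then have "?y * ?E Q = ?E P" by simp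
  then have "?E (Q ^ (p + 2) + P ^ (p + 1) * map_poly pderiv Q - P ^ p * Q * map_poly pderiv P) = 0"
    by (rule eval2_relation_eq_0[OF e D1 D2 f xy(2,3) \<open>?D1 G \<noteq> 0\<close>])
  then have "Q ^ (p + 2) + P ^ (p + 1) * map_poly pderiv Q - P ^ p * Q * map_poly pderiv P = 0"
    using alg_closed_root[OF ac] char
    by (intro eval2_eq_0_imp_eq_0_if_jacobian[OF e D1 D2 jacobian]) auto
  moreover have "Q \<noteq> 0" using PQ(1) by (auto simp: eval2_def)
  ultimately show False using relation_poly_ne_0[OF ac char(2)] by blast
qed

theorem mainTheorem11:
  fixes p :: nat and F :: "'k::field poly poly"
  assumes "alg_closed TYPE('k)"
    and "CHAR('k) = p" and "p > 0"
    and "F = varX ^ p + varY ^ (p + 1)"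
  shows "{a ^ p | a :: 'k poly poly. True} \<subseteq> kalg2 F varY
       \<and> good_pseudo_field_generator F
       \<and> (\<forall>c::'k. k_rational_quotient (F - constA c))
       \<and> \<not> field_generator F"
proof -
  have "prime CHAR('k)" using prime_CHAR_semidom[where 'a = 'k] assms(2,3) by simp
  moreover have "eval2 constA (varX - varY ^ (p + 1)) F varY = varX ^ p"
    by (simp add: assms(4) comm_ring_hom.hom_simps[OF comm_ring_hom_eval2[OF comm_ring_hom_constA]]
        eval2_varX eval2_varY comm_ring_hom_constA)
  then have "varX ^ p \<in> kalg2 F varY" unfolding kalg2_def by (metis (mono_tags) mem_Collect_eq)
  moreover have "varY \<in> kalg2 F varY"
    unfolding kalg2_eq_range by (metis eval2_varY[OF comm_ring_hom_constA] rangeI)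
  ultimately have pth: "a ^ p \<in> kalg2 F varY" for a
    using pth_power_mem_kalg2 assms(2) by blast
  then have "good_pseudo_field_generator F"
    unfolding good_pseudo_field_generator_def using purely_inseparable_over_kfield2 assms(2) by blast
  then show ?thesis
    using pth k_rational_quotient_fibre[OF assms] not_field_generator_X_pow_plus_Y_pow[OF assms] by blast
qed

end
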